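(* Let $p>1$ and let $f:\mathbb{R}^n\times[0,\infty)\to(0,\infty)$ be a smooth positive solution of $\frac{\partial f}{\partial t}=\Delta f+f^p$. Set $u=\log f$. Let $\alpha,\beta,c\in\mathbb{R}$ and let $\phi:\mathbb{R}^n\times[0,\infty)\to[0,\infty)$ be a smooth function, and define $$H:=\alpha\Delta u+\beta|\nabla u|^2+c\,e^{u(p-1)}+\phi .$$ Then $$H_t=\Delta H+2\nabla H\cdot\nabla u+(p-1)e^{u(p-1)}H+2(\alpha-\beta)|\nabla\nabla u|^2+\big(\alpha(p-1)+\beta-cp\big)(p-1)e^{u(p-1)}|\nabla u|^2-(p-1)e^{u(p-1)}\phi+\phi_t-\Delta\phi-2\nabla\phi\cdot\nabla u .$$
   Context: $\Delta$ and $\nabla$ are the spatial Laplacian and gradient on $\mathbb{R}^n$, $\nabla\nabla u$ is the spatial Hessian of $u$ and $|\nabla\nabla u|^2=\sum_{i,j}(\partial_i\partial_j u)^2$. Subscript $t$ denotes the time derivative. *)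

theory Defs
  imports "HOL-Analysis.Analysis"
begin

text \<open>Functions on space-time are curried: g :: real^'n => real => real, g x t.
  A direction is either Some i (spatial coordinate i) or None (time).\<close>

definition pd :: "'n::finite option \<Rightarrow> (real^'n \<Rightarrow> real \<Rightarrow> real) \<Rightarrow> real^'n \<Rightarrow> real \<Rightarrow> real" where
  "pd d g x t = (case d of
      Some i \<Rightarrow> deriv (\<lambda>s. g (x + s *\<^sub>R axis i 1) t) 0
    | None \<Rightarrow> deriv (\<lambda>s. g x (t + s)) 0)"

definition pd_exists :: "'n::finite option \<Rightarrow> (real^'n \<Rightarrow> real \<Rightarrow> real) \<Rightarrow> real^'n \<Rightarrow> real \<Rightarrow> bool" where
  "pd_exists d g x t = (case d of
      Some i \<Rightarrow> (\<lambda>s. g (x + s *\<^sub>R axis i 1) t) differentiable (at 0)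
    | None \<Rightarrow> (\<lambda>s. g x (t + s)) differentiable (at 0))"

definition iter_pd :: "'n::finite option list \<Rightarrow> (real^'n \<Rightarrow> real \<Rightarrow> real) \<Rightarrow> real^'n \<Rightarrow> real \<Rightarrow> real" where
  "iter_pd ds g = foldr pd ds g"

definition smooth_full :: "(real^'n::finite \<Rightarrow> real \<Rightarrow> real) \<Rightarrow> bool" where
  "smooth_full G = (\<forall>ds. (\<forall>d x t. pd_exists d (iter_pd ds G) x t)
      \<and> continuous_on UNIV (\<lambda>z. iter_pd ds G (fst z) (snd z)))"

definition smooth_half :: "(real^'n::finite \<Rightarrow> real \<Rightarrow> real) \<Rightarrow> bool" where
  "smooth_half g = (\<exists>G. smooth_full G \<and> (\<forall>x t. 0 \<le> t \<longrightarrow> G x t = g x t))"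

definition dt :: "(real^'n::finite \<Rightarrow> real \<Rightarrow> real) \<Rightarrow> real^'n \<Rightarrow> real \<Rightarrow> real" where
  "dt g x t = (SOME D. ((\<lambda>s. g x s) has_real_derivative D) (at t within {0..}))"

definition dx :: "'n::finite \<Rightarrow> (real^'n \<Rightarrow> real \<Rightarrow> real) \<Rightarrow> real^'n \<Rightarrow> real \<Rightarrow> real" where
  "dx i g = pd (Some i) g"

definition lap :: "(real^'n::finite \<Rightarrow> real \<Rightarrow> real) \<Rightarrow> real^'n \<Rightarrow> real \<Rightarrow> real" where
  "lap g x t = (\<Sum>i\<in>UNIV. dx i (dx i g) x t)"

definition grad :: "(real^'n::finite \<Rightarrow> real \<Rightarrow> real) \<Rightarrow> real^'n \<Rightarrow> real \<Rightarrow> real^'n" where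
  "grad g x t = (\<chi> i. dx i g x t)"

definition hess_sq :: "(real^'n::finite \<Rightarrow> real \<Rightarrow> real) \<Rightarrow> real^'n \<Rightarrow> real \<Rightarrow> real" where
  "hess_sq g x t = (\<Sum>i\<in>UNIV. \<Sum>j\<in>UNIV. (dx i (dx j g) x t)\<^sup>2)"

end

theory Submission
  imports Defs
begin

(* Since f > 0 one works with u = ln f, which solves u_t = \<Delta>u + |\<nabla>u|^2 + e^((p-1)u).
   Differentiating H in time and commuting \<partial>_t with the spatial derivatives gives
   H_t = \<alpha> \<Delta>u_t + 2\<beta> \<nabla>u.\<nabla>u_t + c (p-1) e^((p-1)u) u_t + \<phi>_t.  Substituting u_t, both sides
   of the claimed identity become the same polynomial in \<Delta>\<Delta>u, |\<nabla>\<nabla>u|^2, \<nabla>u.\<nabla>\<Delta>u,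
   \<nabla>\<nabla>u(\<nabla>u,\<nabla>u), |\<nabla>u|^2, \<Delta>u, e^((p-1)u) and the derivatives of \<phi>, once \<nabla>\<Delta>u = \<Delta>\<nabla>u is
   used.

   All derivatives are computed from a smooth extension G of f to negative times, through the
   ratios (\<partial>^ds G)/G: every derivative of u is a polynomial in them, and they are closed under
   differentiation, \<partial>_d ((\<partial>^ds G)/G) = (\<partial>_d \<partial>^ds G)/G - ((\<partial>^ds G)/G) ((\<partial>_d G)/G).  The
   commutation of derivatives comes from Schwarz's theorem for G, proved from the mean value
   theorem applied to second differences. *)

section \<open>Symmetry of mixed directional derivatives\<close>

definition directional_deriv :: "'a::real_normed_vector \<Rightarrow> ('a \<Rightarrow> real) \<Rightarrow> 'a \<Rightarrow> real" where
  "directional_deriv v F z = deriv (\<lambda>s. F (z + s *\<^sub>R v)) 0"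

lemma has_real_derivative_along_line:
  assumes "\<forall>z. (\<lambda>s. F (z + s *\<^sub>R v)) differentiable (at 0)"
  shows "((\<lambda>s. F (z + s *\<^sub>R v)) has_real_derivative directional_deriv v F (z + \<sigma> *\<^sub>R v)) (at \<sigma>)"
proof -
  have "((\<lambda>s. F ((z + \<sigma> *\<^sub>R v) + s *\<^sub>R v)) has_real_derivative
      directional_deriv v F (z + \<sigma> *\<^sub>R v)) (at 0)"
    using assms by (simp add: directional_deriv_def DERIV_deriv_iff_real_differentiable)
  then have "((\<lambda>s. F (z + (s + \<sigma>) *\<^sub>R v)) has_real_derivative
      directional_deriv v F (z + \<sigma> *\<^sub>R v)) (at 0)"
    by (simp add: scaleR_add_left algebra_simps)
  then show ?thesis
    using DERIV_shift[of "\<lambda>s. F (z + s *\<^sub>R v)" _ 0 \<sigma>] by simp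
qed

lemma second_difference_mean_value:
  fixes F :: "'a::real_normed_vector \<Rightarrow> real"
  assumes dv: "\<forall>z. (\<lambda>s. F (z + s *\<^sub>R v)) differentiable (at 0)"
    and dvw: "\<forall>z. (\<lambda>s. directional_deriv v F (z + s *\<^sub>R w)) differentiable (at 0)"
    and "\<epsilon> > 0"
  obtains \<sigma> \<rho> where "0 < \<sigma>" "\<sigma> < \<epsilon>" "0 < \<rho>" "\<rho> < \<epsilon>"
    "F (z + \<epsilon> *\<^sub>R v + \<epsilon> *\<^sub>R w) - F (z + \<epsilon> *\<^sub>R v) - F (z + \<epsilon> *\<^sub>R w) + F z
       = \<epsilon>\<^sup>2 * directional_deriv w (directional_deriv v F) (z + \<sigma> *\<^sub>R v + \<rho> *\<^sub>R w)"
proof -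
  let ?Fv = "directional_deriv v F"
  have "\<exists>\<sigma>>0. \<sigma> < \<epsilon> \<and> (F (z + \<epsilon> *\<^sub>R w + \<epsilon> *\<^sub>R v) - F (z + \<epsilon> *\<^sub>R v)) - (F (z + \<epsilon> *\<^sub>R w) - F z)
      = (\<epsilon> - 0) * (?Fv (z + \<epsilon> *\<^sub>R w + \<sigma> *\<^sub>R v) - ?Fv (z + \<sigma> *\<^sub>R v))"
    using MVT2[OF \<open>\<epsilon> > 0\<close>, of "\<lambda>s. F (z + \<epsilon> *\<^sub>R w + s *\<^sub>R v) - F (z + s *\<^sub>R v)"]
    by (force intro!: derivative_intros has_real_derivative_along_line[OF dv])
  then obtain \<sigma> where \<sigma>: "0 < \<sigma>" "\<sigma> < \<epsilon>"
    "F (z + \<epsilon> *\<^sub>R v + \<epsilon> *\<^sub>R w) - F (z + \<epsilon> *\<^sub>R v) - F (z + \<epsilon> *\<^sub>R w) + F z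
       = \<epsilon> * (?Fv (z + \<sigma> *\<^sub>R v + \<epsilon> *\<^sub>R w) - ?Fv (z + \<sigma> *\<^sub>R v))"
    by (auto simp: algebra_simps)
  have "\<exists>\<rho>>0. \<rho> < \<epsilon> \<and> ?Fv (z + \<sigma> *\<^sub>R v + \<epsilon> *\<^sub>R w) - ?Fv (z + \<sigma> *\<^sub>R v + 0 *\<^sub>R w)
      = (\<epsilon> - 0) * directional_deriv w ?Fv (z + \<sigma> *\<^sub>R v + \<rho> *\<^sub>R w)"
    using MVT2[OF \<open>\<epsilon> > 0\<close>, of "\<lambda>s. ?Fv (z + \<sigma> *\<^sub>R v + s *\<^sub>R w)"]
    by (force intro!: has_real_derivative_along_line[OF dvw])
  then obtain \<rho> where "0 < \<rho>" "\<rho> < \<epsilon>"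
    "?Fv (z + \<sigma> *\<^sub>R v + \<epsilon> *\<^sub>R w) - ?Fv (z + \<sigma> *\<^sub>R v)
       = \<epsilon> * directional_deriv w ?Fv (z + \<sigma> *\<^sub>R v + \<rho> *\<^sub>R w)"
    by auto
  with \<sigma> show thesis
    by (intro that[of \<sigma> \<rho>]) (simp_all add: power2_eq_square)
qed

lemma mixed_directional_derivs_meet:
  fixes F :: "'a::real_normed_vector \<Rightarrow> real"
  assumes dv: "\<forall>z. (\<lambda>s. F (z + s *\<^sub>R v)) differentiable (at 0)"
    and dw: "\<forall>z. (\<lambda>s. F (z + s *\<^sub>R w)) differentiable (at 0)"
    and dvw: "\<forall>z. (\<lambda>s. directional_deriv v F (z + s *\<^sub>R w)) differentiable (at 0)"
    and dwv: "\<forall>z. (\<lambda>s. directional_deriv w F (z + s *\<^sub>R v)) differentiable (at 0)"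
    and "\<epsilon> > 0"
  obtains z1 z2
  where "dist z1 z \<le> \<epsilon> * (norm v + norm w)" "dist z2 z \<le> \<epsilon> * (norm v + norm w)"
    "directional_deriv w (directional_deriv v F) z1 = directional_deriv v (directional_deriv w F) z2"
proof -
  have near: "dist (z + \<sigma> *\<^sub>R v + \<rho> *\<^sub>R w) z \<le> \<epsilon> * (norm v + norm w)"
    if "0 < \<sigma>" "\<sigma> < \<epsilon>" "0 < \<rho>" "\<rho> < \<epsilon>" for \<sigma> \<rho>
  proof -
    have "dist (z + \<sigma> *\<^sub>R v + \<rho> *\<^sub>R w) z \<le> \<sigma> * norm v + \<rho> * norm w"
      using norm_triangle_ineq[of "\<sigma> *\<^sub>R v" "\<rho> *\<^sub>R w"] that by (simp add: dist_norm)
    also have "\<dots> \<le> \<epsilon> * (norm v + norm w)"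
      using that by (simp add: distrib_left add_mono mult_right_mono)
    finally show ?thesis .
  qed
  obtain \<sigma>1 \<rho>1 where "0 < \<sigma>1" "\<sigma>1 < \<epsilon>" "0 < \<rho>1" "\<rho>1 < \<epsilon>" and diff1:
    "F (z + \<epsilon> *\<^sub>R v + \<epsilon> *\<^sub>R w) - F (z + \<epsilon> *\<^sub>R v) - F (z + \<epsilon> *\<^sub>R w) + F z
       = \<epsilon>\<^sup>2 * directional_deriv w (directional_deriv v F) (z + \<sigma>1 *\<^sub>R v + \<rho>1 *\<^sub>R w)"
    using second_difference_mean_value[OF dv dvw \<open>\<epsilon> > 0\<close>] by blast
  obtain \<rho>2 \<sigma>2 where "0 < \<rho>2" "\<rho>2 < \<epsilon>" "0 < \<sigma>2" "\<sigma>2 < \<epsilon>" and diff2: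
    "F (z + \<epsilon> *\<^sub>R w + \<epsilon> *\<^sub>R v) - F (z + \<epsilon> *\<^sub>R w) - F (z + \<epsilon> *\<^sub>R v) + F z
       = \<epsilon>\<^sup>2 * directional_deriv v (directional_deriv w F) (z + \<rho>2 *\<^sub>R w + \<sigma>2 *\<^sub>R v)"
    using second_difference_mean_value[OF dw dwv \<open>\<epsilon> > 0\<close>] by blast
  \<comment> \<open>the second difference is symmetric in v and w\<close>
  have "directional_deriv w (directional_deriv v F) (z + \<sigma>1 *\<^sub>R v + \<rho>1 *\<^sub>R w) =
      directional_deriv v (directional_deriv w F) (z + \<sigma>2 *\<^sub>R v + \<rho>2 *\<^sub>R w)"
    using diff1 diff2 \<open>\<epsilon> > 0\<close> by (simp add: algebra_simps)
  moreover note near[OF \<open>0 < \<sigma>1\<close> \<open>\<sigma>1 < \<epsilon>\<close> \<open>0 < \<rho>1\<close> \<open>\<rho>1 < \<epsilon>\<close>]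
    near[OF \<open>0 < \<sigma>2\<close> \<open>\<sigma>2 < \<epsilon>\<close> \<open>0 < \<rho>2\<close> \<open>\<rho>2 < \<epsilon>\<close>]
  ultimately show thesis
    by (rule that[rotated 2])
qed

lemma directional_deriv_commute:
  fixes F :: "'a::real_normed_vector \<Rightarrow> real"
  assumes dv: "\<forall>z. (\<lambda>s. F (z + s *\<^sub>R v)) differentiable (at 0)"
    and dw: "\<forall>z. (\<lambda>s. F (z + s *\<^sub>R w)) differentiable (at 0)"
    and dvw: "\<forall>z. (\<lambda>s. directional_deriv v F (z + s *\<^sub>R w)) differentiable (at 0)"
    and dwv: "\<forall>z. (\<lambda>s. directional_deriv w F (z + s *\<^sub>R v)) differentiable (at 0)"
    and cont_vw: "isCont (directional_deriv w (directional_deriv v F)) z"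
    and cont_wv: "isCont (directional_deriv v (directional_deriv w F)) z"
  shows "directional_deriv w (directional_deriv v F) z =
    directional_deriv v (directional_deriv w F) z"
proof (rule ccontr)
  let ?D1 = "directional_deriv w (directional_deriv v F)"
  let ?D2 = "directional_deriv v (directional_deriv w F)"
  define e where "e = \<bar>?D1 z - ?D2 z\<bar> / 2"
  assume "?D1 z \<noteq> ?D2 z"
  then have "e > 0" by (simp add: e_def)
  obtain \<delta>1 where "\<delta>1 > 0" and \<delta>1: "\<And>y. dist y z < \<delta>1 \<Longrightarrow> dist (?D1 y) (?D1 z) < e"
    using cont_vw \<open>e > 0\<close> by (metis continuous_at_eps_delta)
  obtain \<delta>2 where "\<delta>2 > 0" and \<delta>2: "\<And>y. dist y z < \<delta>2 \<Longrightarrow> dist (?D2 y) (?D2 z) < e"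
    using cont_wv \<open>e > 0\<close> by (metis continuous_at_eps_delta)
  have "norm v + norm w + 1 > 0"
    by (simp add: add_nonneg_pos)
  define \<epsilon> where "\<epsilon> = min \<delta>1 \<delta>2 / (norm v + norm w + 1)"
  have "\<epsilon> > 0"
    using \<open>\<delta>1 > 0\<close> \<open>\<delta>2 > 0\<close> \<open>norm v + norm w + 1 > 0\<close> by (simp add: \<epsilon>_def)
  have "\<epsilon> * (norm v + norm w) < \<epsilon> * (norm v + norm w + 1)"
    using \<open>\<epsilon> > 0\<close> by simp
  also have "\<dots> = min \<delta>1 \<delta>2"
    using \<open>norm v + norm w + 1 > 0\<close> by (simp add: \<epsilon>_def)
  finally have small: "\<epsilon> * (norm v + norm w) < min \<delta>1 \<delta>2" .
  obtain z1 z2 where z1: "dist z1 z < min \<delta>1 \<delta>2" and z2: "dist z2 z < min \<delta>1 \<delta>2"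
    and "?D1 z1 = ?D2 z2"
    using mixed_directional_derivs_meet[OF dv dw dvw dwv \<open>\<epsilon> > 0\<close>, of z] small
    by (metis order.strict_trans1)
  moreover have "dist (?D1 z1) (?D1 z) < e"
    using \<delta>1 z1 by simp
  moreover have "dist (?D2 z2) (?D2 z) < e"
    using \<delta>2 z2 by simp
  ultimately have "dist (?D1 z) (?D2 z) < 2 * e"
    using dist_triangle_less_add[of "?D1 z" "?D1 z1" e "?D2 z" e] by (simp add: dist_commute)
  then show False
    by (simp add: e_def dist_real_def)
qed

section \<open>Partial derivatives of smooth space-time functions\<close>

definition spacetime_direction :: "'n::finite option \<Rightarrow> (real^'n) \<times> real" where
  "spacetime_direction d = (case d of Some i \<Rightarrow> (axis i 1, 0) | None \<Rightarrow> (0, 1))"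

lemma case_prod_pd:
  "case_prod (pd d g) = directional_deriv (spacetime_direction d) (case_prod g)"
  by (cases d) (auto simp: fun_eq_iff pd_def directional_deriv_def spacetime_direction_def)

lemma pd_exists_iff_differentiable:
  "pd_exists d g x t \<longleftrightarrow>
     (\<lambda>s. case_prod g ((x, t) + s *\<^sub>R spacetime_direction d)) differentiable (at 0)"
  by (cases d) (simp_all add: pd_exists_def spacetime_direction_def)

lemma iter_pd_Nil [simp]: "iter_pd [] G = G"
  by (simp add: iter_pd_def)

lemma iter_pd_Cons: "iter_pd (d # ds) G = pd d (iter_pd ds G)"
  by (simp add: iter_pd_def)

lemma iter_pd_append: "iter_pd (xs @ ys) G = iter_pd xs (iter_pd ys G)"
  by (simp add: iter_pd_def)

lemma smooth_full_differentiable_along: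
  "smooth_full G \<Longrightarrow>
     (\<lambda>s. case_prod (iter_pd ds G) (z + s *\<^sub>R spacetime_direction d)) differentiable (at 0)"
  using pd_exists_iff_differentiable[of d "iter_pd ds G" "fst z" "snd z"]
  by (simp add: smooth_full_def)

lemma smooth_full_isCont:
  assumes "smooth_full G"
  shows "isCont (case_prod (iter_pd ds G)) z"
proof -
  have "continuous_on UNIV (case_prod (iter_pd ds G))"
    using assms by (simp add: smooth_full_def case_prod_unfold)
  then show ?thesis
    by (rule continuous_on_interior) simp
qed

lemma smooth_full_iter_pd_swap:
  assumes "smooth_full G"
  shows "iter_pd (xs @ a # b # ds) G = iter_pd (xs @ b # a # ds) G"
proof -
  let ?v = "spacetime_direction b" and ?w = "spacetime_direction a"
  let ?F = "case_prod (iter_pd ds G)"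
  have "case_prod (iter_pd (a # b # ds) G) z = case_prod (iter_pd (b # a # ds) G) z" for z
    using directional_deriv_commute[of ?F ?v ?w z]
      smooth_full_differentiable_along[OF assms, of ds]
      smooth_full_differentiable_along[OF assms, of "b # ds"]
      smooth_full_differentiable_along[OF assms, of "a # ds"]
      smooth_full_isCont[OF assms, where ds = "a # b # ds"]
      smooth_full_isCont[OF assms, where ds = "b # a # ds"]
    unfolding iter_pd_Cons case_prod_pd by blast
  from this[of "(x, t)" for x t] have "iter_pd (a # b # ds) G = iter_pd (b # a # ds) G"
    by (intro ext) simp
  then show ?thesis
    by (simp add: iter_pd_append)
qed

lemma smooth_full_has_derivative_along:
  "smooth_full G \<Longrightarrow>
     ((\<lambda>r. case_prod (iter_pd ds G) (z + r *\<^sub>R spacetime_direction d))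
        has_real_derivative case_prod (iter_pd (d # ds) G) z) (at 0)"
  using smooth_full_differentiable_along[of G ds z d]
  by (simp add: iter_pd_Cons case_prod_pd directional_deriv_def DERIV_deriv_iff_real_differentiable)

lemma smooth_full_has_partial:
  "smooth_full G \<Longrightarrow>
     ((\<lambda>r. iter_pd ds G (y + r *\<^sub>R axis i 1) t) has_real_derivative
        iter_pd (Some i # ds) G y t) (at 0)"
  using smooth_full_has_derivative_along[of G ds "(y, t)" "Some i"]
  by (simp add: spacetime_direction_def)

lemma smooth_full_has_time_deriv:
  "smooth_full G \<Longrightarrow>
     ((\<lambda>s. iter_pd ds G x s) has_real_derivative iter_pd (None # ds) G x t) (at t)"
  using smooth_full_has_derivative_along[of G ds "(x, t)" None]
    DERIV_shift[of "iter_pd ds G x" _ 0 t]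
  by (simp add: spacetime_direction_def add.commute)

lemma dt_eqI:
  assumes "(K has_real_derivative D) (at t)" "0 \<le> t" "\<forall>s\<ge>0. g x s = K s"
  shows "dt g x t = D"
proof -
  have "(g x has_real_derivative D) (at t within {0..})"
    using has_field_derivative_transform_within[OF has_field_derivative_at_within[OF assms(1)],
        of 1 "{0..}"] assms(2,3)
    by auto
  moreover have "D' = D" if "(g x has_real_derivative D') (at t within {0..})" for D'
  proof -
    have "at t within {t..} = at_right t"
      by (simp add: at_within_Ici_at_right)
    moreover have "{t..} \<subseteq> {0..}"
      using assms(2) by auto
    ultimately have "(g x has_real_derivative D') (at_right t)"
      "(g x has_real_derivative D) (at_right t)"
      using that \<open>(g x has_real_derivative D) (at t within {0..})\<close> by (metis DERIV_subset)+
    then show ?thesis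
      using has_field_derivative_unique trivial_limit_at_right_real by blast
  qed
  ultimately show ?thesis
    unfolding dt_def by (rule some_equality)
qed

lemma dt_eq_time_deriv:
  assumes "smooth_full G" "\<forall>x s. 0 \<le> s \<longrightarrow> G x s = g x s" "0 \<le> t"
  shows "dt g x t = iter_pd [None] G x t"
proof (rule dt_eqI)
  show "(G x has_real_derivative iter_pd [None] G x t) (at t)"
    using smooth_full_has_time_deriv[OF assms(1), of "[]" x t] by simp
qed (use assms in auto)

abbreviation partial :: "'n::finite \<Rightarrow> (real^'n \<Rightarrow> real) \<Rightarrow> real^'n \<Rightarrow> real" where
  "partial i \<equiv> directional_deriv (axis i 1)"

definition partially_differentiable :: "(real^'n::finite \<Rightarrow> real) \<Rightarrow> bool" where
  "partially_differentiable h \<longleftrightarrow> (\<forall>i y. (\<lambda>r. h (y + r *\<^sub>R axis i 1)) differentiable (at 0))"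

lemma partial_eqI:
  "((\<lambda>r. h (y + r *\<^sub>R axis i 1)) has_real_derivative D) (at 0) \<Longrightarrow> partial i h y = D"
  by (simp add: directional_deriv_def DERIV_imp_deriv)

lemma partially_differentiableI:
  "(\<And>i y. \<exists>D. ((\<lambda>r. h (y + r *\<^sub>R axis i 1)) has_real_derivative D) (at 0)) \<Longrightarrow>
     partially_differentiable h"
  unfolding partially_differentiable_def using real_differentiable_def by blast

lemma partially_differentiable_has_partial:
  "partially_differentiable h \<Longrightarrow>
     ((\<lambda>r. h (y + r *\<^sub>R axis i 1)) has_real_derivative partial i h y) (at 0)"
  by (simp add: partially_differentiable_def directional_deriv_def
      DERIV_deriv_iff_real_differentiable)

lemma dx_eq_partial: "dx i g x t = partial i (\<lambda>y. g y t) x"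
  by (simp add: dx_def pd_def directional_deriv_def)

lemma lap_eq_sum_partial: "lap g x t = (\<Sum>i\<in>UNIV. partial i (partial i (\<lambda>y. g y t)) x)"
  by (simp add: lap_def dx_eq_partial[abs_def])

lemma grad_inner_eq_sum_partial:
  "grad g x t \<bullet> grad h x t = (\<Sum>i\<in>UNIV. partial i (\<lambda>y. g y t) x * partial i (\<lambda>y. h y t) x)"
  by (simp add: grad_def inner_vec_def dx_eq_partial)

lemma norm_grad_sq_eq_sum_partial:
  "(norm (grad g x t))\<^sup>2 = (\<Sum>i\<in>UNIV. (partial i (\<lambda>y. g y t) x)\<^sup>2)"
  unfolding power2_norm_eq_inner grad_inner_eq_sum_partial by (simp add: power2_eq_square)

lemma hess_sq_eq_sum_partial:
  "hess_sq g x t = (\<Sum>i\<in>UNIV. \<Sum>j\<in>UNIV. (partial i (partial j (\<lambda>y. g y t)) x)\<^sup>2)"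
  by (simp add: hess_sq_def dx_eq_partial[abs_def])

lemma partial_const [simp]: "partial i (\<lambda>_. c) = (\<lambda>_. 0)"
  by (auto intro!: partial_eqI derivative_eq_intros)

lemma partially_differentiable_const: "partially_differentiable (\<lambda>_. c)"
  by (auto intro!: partially_differentiableI derivative_intros)

lemma partial_iter_pd_slice:
  "smooth_full G \<Longrightarrow> partial i (\<lambda>y. iter_pd ds G y t) = (\<lambda>y. iter_pd (Some i # ds) G y t)"
  by (rule ext, rule partial_eqI, rule smooth_full_has_partial)

lemma partially_differentiable_iter_pd_slice:
  "smooth_full G \<Longrightarrow> partially_differentiable (\<lambda>y. iter_pd ds G y t)"
  by (blast intro: partially_differentiableI smooth_full_has_partial)

definition rel_pd ::
  "'n::finite option list \<Rightarrow> (real^'n \<Rightarrow> real \<Rightarrow> real) \<Rightarrow> real^'n \<Rightarrow> real \<Rightarrow> real" where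
  "rel_pd ds G x t = iter_pd ds G x t / G x t"

lemma rel_pd_has_partial:
  assumes "smooth_full G" "G y t \<noteq> 0"
  shows "((\<lambda>r. rel_pd ds G (y + r *\<^sub>R axis i 1) t) has_real_derivative
           rel_pd (Some i # ds) G y t - rel_pd ds G y t * rel_pd [Some i] G y t) (at 0)"
  using smooth_full_has_partial[OF assms(1), of ds y i t]
    smooth_full_has_partial[OF assms(1), of "[]" y i t] assms(2)
  unfolding rel_pd_def
  by (auto intro!: derivative_eq_intros simp: field_simps power2_eq_square)

lemma rel_pd_has_time_deriv:
  assumes "smooth_full G" "G x t \<noteq> 0"
  shows "((\<lambda>s. rel_pd ds G x s) has_real_derivative
           rel_pd (None # ds) G x t - rel_pd ds G x t * rel_pd [None] G x t) (at t)"
  using smooth_full_has_time_deriv[OF assms(1), of ds x t]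
    smooth_full_has_time_deriv[OF assms(1), of "[]" x t] assms(2)
  unfolding rel_pd_def
  by (auto intro!: derivative_eq_intros simp: field_simps power2_eq_square)

lemma rel_pd_swap:
  "smooth_full G \<Longrightarrow> rel_pd (xs @ a # b # ds) G = rel_pd (xs @ b # a # ds) G"
  by (simp add: rel_pd_def[abs_def] smooth_full_iter_pd_swap)

(* H expressed through the extension G instead of ln f, so that it is differentiable in time
   also at t = 0. *)
definition harnack_spacetime ::
  "(real^'n::finite \<Rightarrow> real \<Rightarrow> real) \<Rightarrow> (real^'n \<Rightarrow> real \<Rightarrow> real) \<Rightarrow> real \<Rightarrow> real \<Rightarrow> real \<Rightarrow> real
     \<Rightarrow> real^'n \<Rightarrow> real \<Rightarrow> real" where
  "harnack_spacetime G \<Phi> p a b c x s =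
     a * (\<Sum>j\<in>UNIV. rel_pd [Some j, Some j] G x s - (rel_pd [Some j] G x s)\<^sup>2)
     + b * (\<Sum>j\<in>UNIV. (rel_pd [Some j] G x s)\<^sup>2) + c * exp (ln (G x s) * (p - 1)) + \<Phi> x s"

section \<open>Derivatives of ln G on a time slice\<close>

locale positive_smooth_slice =
  fixes G :: "real^'n::finite \<Rightarrow> real \<Rightarrow> real" and t :: real
  assumes smooth: "smooth_full G" and pos: "\<And>y. G y t > 0"
begin

definition q :: "'n option list \<Rightarrow> real^'n \<Rightarrow> real" where
  "q ds y = rel_pd ds G y t"

definition u :: "real^'n \<Rightarrow> real" where
  "u y = ln (G y t)"

lemma has_partial_q:
  "((\<lambda>r. q ds (y + r *\<^sub>R axis i 1)) has_real_derivative
     q (Some i # ds) y - q ds y * q [Some i] y) (at 0)"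
  unfolding q_def using rel_pd_has_partial[OF smooth] pos[of y] by simp

lemma partial_q: "partial i (q ds) y = q (Some i # ds) y - q ds y * q [Some i] y"
  by (rule partial_eqI[OF has_partial_q])

lemma q_swap: "q (xs @ a # b # ds) = q (xs @ b # a # ds)"
  by (simp add: q_def[abs_def] rel_pd_swap[OF smooth])

lemma has_time_deriv_q:
  "((\<lambda>s. rel_pd ds G x s) has_real_derivative q (None # ds) x - q ds x * q [None] x) (at t)"
  using rel_pd_has_time_deriv[OF smooth, of x t ds] pos[of x] by (simp add: q_def)

lemma has_partial_u: "((\<lambda>r. u (y + r *\<^sub>R axis i 1)) has_real_derivative q [Some i] y) (at 0)"
  using smooth_full_has_partial[OF smooth, of "[]" y i t] pos[of y]
  unfolding u_def q_def rel_pd_def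
  by (auto intro!: derivative_eq_intros simp: field_simps)

lemma partial_u: "partial i u = q [Some i]"
  using partial_eqI[OF has_partial_u] by blast

lemma partial_partial_u:
  "partial k (partial j u) y = q [Some k, Some j] y - q [Some j] y * q [Some k] y"
  by (simp add: partial_u partial_q)

lemma partial_partial_q:
  "partial l (partial k (q ds)) y =
     q (Some l # Some k # ds) y - q (Some k # ds) y * q [Some l] y
     - (q (Some l # ds) y - q ds y * q [Some l] y) * q [Some k] y
     - q ds y * (q [Some l, Some k] y - q [Some k] y * q [Some l] y)"
proof -
  have "partial k (q ds) = (\<lambda>y. q (Some k # ds) y - q ds y * q [Some k] y)"
    by (simp add: fun_eq_iff partial_q)
  then show ?thesis
    by (auto intro!: partial_eqI derivative_eq_intros has_partial_q)
qed

lemma partial_partial_partial_u: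
  "partial l (partial k (partial j u)) y =
     q [Some l, Some k, Some j] y - q [Some k, Some j] y * q [Some l] y
     - (q [Some l, Some j] y - q [Some j] y * q [Some l] y) * q [Some k] y
     - q [Some j] y * (q [Some l, Some k] y - q [Some k] y * q [Some l] y)"
  by (simp add: partial_u partial_partial_q)

lemma partial_partial_partial_u_swap:
  "partial a (partial a (partial b u)) y = partial b (partial a (partial a u)) y"
proof -
  have "q [Some a, Some a, Some b] = q [Some b, Some a, Some a]"
    using q_swap[of "[Some a]" "Some a" "Some b" "[]"] q_swap[of "[]" "Some a" "Some b" "[Some a]"]
    by simp
  moreover have "q [Some a, Some b] = q [Some b, Some a]"
    using q_swap[of "[]" "Some a" "Some b" "[]"] by simp
  ultimately show ?thesis
    unfolding partial_partial_partial_u by (simp add: algebra_simps)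
qed

lemma partially_differentiable_u: "partially_differentiable u"
  using has_partial_u by (blast intro: partially_differentiableI)

lemma partially_differentiable_partial_u: "partially_differentiable (partial j u)"
  unfolding partial_u using has_partial_q by (blast intro: partially_differentiableI)

lemma partially_differentiable_partial_partial_u:
  "partially_differentiable (partial k (partial j u))"
  unfolding partial_partial_u[abs_def]
  by (intro partially_differentiableI exI) (rule DERIV_diff DERIV_mult has_partial_q)+

lemma partially_differentiable_partial_partial_partial_u:
  "partially_differentiable (partial l (partial k (partial j u)))"
  unfolding partial_partial_partial_u[abs_def]
  by (intro partially_differentiableI exI) (rule DERIV_diff DERIV_mult has_partial_q)+

section \<open>The Harnack quantity on a time slice\<close>

definition lap_u :: "real^'n \<Rightarrow> real" where
  "lap_u y = (\<Sum>j\<in>UNIV. partial j (partial j u) y)"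

definition grad_sq_u :: "real^'n \<Rightarrow> real" where
  "grad_sq_u y = (\<Sum>j\<in>UNIV. (partial j u y)\<^sup>2)"

definition bilap_u :: "real^'n \<Rightarrow> real" where
  "bilap_u y = (\<Sum>i\<in>UNIV. \<Sum>j\<in>UNIV. partial i (partial i (partial j (partial j u))) y)"

definition hess_sq_u :: "real^'n \<Rightarrow> real" where
  "hess_sq_u y = (\<Sum>i\<in>UNIV. \<Sum>j\<in>UNIV. (partial i (partial j u) y)\<^sup>2)"

definition grad_u_inner_grad_lap_u :: "real^'n \<Rightarrow> real" where
  "grad_u_inner_grad_lap_u y =
    (\<Sum>i\<in>UNIV. partial i u y * (\<Sum>j\<in>UNIV. partial i (partial j (partial j u)) y))"

definition hess_u_grad_u_grad_u :: "real^'n \<Rightarrow> real" where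
  "hess_u_grad_u_grad_u y =
    (\<Sum>i\<in>UNIV. \<Sum>j\<in>UNIV. partial i u y * partial i (partial j u) y * partial j u y)"

(* With a = b = c = 1 and P = 0 this is the time derivative of u, see log_heat_equation. *)
definition harnack :: "real \<Rightarrow> real \<Rightarrow> real \<Rightarrow> real \<Rightarrow> (real^'n \<Rightarrow> real) \<Rightarrow> real^'n \<Rightarrow> real" where
  "harnack p a b c P y = a * lap_u y + b * grad_sq_u y + c * exp (u y * (p - 1)) + P y"

lemmas has_partial_derivs_u =
  partially_differentiable_has_partial[OF partially_differentiable_u]
  partially_differentiable_has_partial[OF partially_differentiable_partial_u]
  partially_differentiable_has_partial[OF partially_differentiable_partial_partial_u]
  partially_differentiable_has_partial[OF partially_differentiable_partial_partial_partial_u]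

lemma partial_harnack:
  assumes "partially_differentiable P"
  shows "partial i (harnack p a b c P) y =
    a * (\<Sum>j\<in>UNIV. partial i (partial j (partial j u)) y)
    + b * (\<Sum>j\<in>UNIV. 2 * partial j u y * partial i (partial j u) y)
    + c * ((p - 1) * exp (u y * (p - 1)) * partial i u y) + partial i P y"
  unfolding harnack_def[abs_def] lap_u_def grad_sq_u_def
  by (rule partial_eqI)
    (rule derivative_eq_intros has_partial_derivs_u
       partially_differentiable_has_partial[OF assms] refl
     | simp add: ac_simps)+

lemma partial_partial_harnack:
  assumes "partially_differentiable P" "partially_differentiable (partial i P)"
  shows "partial i (partial i (harnack p a b c P)) y =
    a * (\<Sum>j\<in>UNIV. partial i (partial i (partial j (partial j u))) y)
    + b * (\<Sum>j\<in>UNIV. 2 * ((partial i (partial j u) y)\<^sup>2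
                          + partial j u y * partial i (partial i (partial j u)) y))
    + c * ((p - 1) * exp (u y * (p - 1))
           * ((p - 1) * (partial i u y)\<^sup>2 + partial i (partial i u) y))
    + partial i (partial i P) y"
  unfolding partial_harnack[OF assms(1), abs_def]
  by (rule partial_eqI)
    (rule derivative_eq_intros has_partial_derivs_u
       partially_differentiable_has_partial[OF assms(2)] refl
     | simp add: algebra_simps power2_eq_square sum.distrib)+

lemma grad_u_inner_lap_grad_u:
  "(\<Sum>i\<in>UNIV. \<Sum>j\<in>UNIV. partial j u y * partial i (partial i (partial j u)) y) =
    grad_u_inner_grad_lap_u y"
proof -
  have "(\<Sum>i\<in>UNIV. \<Sum>j\<in>UNIV. partial j u y * partial i (partial i (partial j u)) y)
      = (\<Sum>j\<in>UNIV. \<Sum>i\<in>UNIV. partial j u y * partial j (partial i (partial i u)) y)"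
    by (subst sum.swap) (simp add: partial_partial_partial_u_swap)
  then show ?thesis
    by (simp add: grad_u_inner_grad_lap_u_def sum_distrib_left)
qed

lemma lap_harnack:
  assumes "partially_differentiable P" "\<And>i. partially_differentiable (partial i P)"
  shows "(\<Sum>i\<in>UNIV. partial i (partial i (harnack p a b c P)) y) =
    a * bilap_u y + 2 * b * (hess_sq_u y + grad_u_inner_grad_lap_u y)
    + c * (p - 1) * exp (u y * (p - 1)) * ((p - 1) * grad_sq_u y + lap_u y)
    + (\<Sum>i\<in>UNIV. partial i (partial i P) y)"
  unfolding partial_partial_harnack[OF assms]
  by (simp only: sum.distrib sum_distrib_left[symmetric] grad_u_inner_lap_grad_u
      bilap_u_def[symmetric] hess_sq_u_def[symmetric] grad_sq_u_def[symmetric] lap_u_def[symmetric])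

lemma grad_harnack_inner_grad_u:
  assumes "partially_differentiable P"
  shows "(\<Sum>i\<in>UNIV. partial i (harnack p a b c P) y * partial i u y) =
    a * grad_u_inner_grad_lap_u y + 2 * b * hess_u_grad_u_grad_u y
    + c * (p - 1) * exp (u y * (p - 1)) * grad_sq_u y + (\<Sum>i\<in>UNIV. partial i P y * partial i u y)"
proof -
  have "partial i (harnack p a b c P) y * partial i u y =
      a * (partial i u y * (\<Sum>j\<in>UNIV. partial i (partial j (partial j u)) y))
      + 2 * b * (\<Sum>j\<in>UNIV. partial i u y * partial i (partial j u) y * partial j u y)
      + c * (p - 1) * exp (u y * (p - 1)) * (partial i u y)\<^sup>2 + partial i P y * partial i u y" for i
    by (simp add: partial_harnack[OF assms] sum_distrib_left algebra_simps power2_eq_square)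
  then show ?thesis
    by (simp only: sum.distrib sum_distrib_left[symmetric] grad_u_inner_grad_lap_u_def[symmetric]
      hess_u_grad_u_grad_u_def[symmetric] grad_sq_u_def[symmetric])
qed

lemma harnack_eq_harnack_spacetime:
  "harnack p a b c (\<lambda>y. \<Phi> y t) y = harnack_spacetime G \<Phi> p a b c y t"
  by (simp add: harnack_def harnack_spacetime_def lap_u_def grad_sq_u_def partial_q partial_u
      q_def u_def power2_eq_square)

lemma log_heat_equation:
  assumes "\<And>y. iter_pd [None] G y t = (\<Sum>k\<in>UNIV. iter_pd [Some k, Some k] G y t) + G y t powr p"
  shows "q [None] = harnack p 1 1 1 (\<lambda>_. 0)"
proof
  fix y
  have "G y t > 0" by (rule pos)
  then have "exp (u y * (p - 1)) = G y t powr p / G y t"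
    by (simp add: u_def powr_def exp_diff algebra_simps)
  then have "harnack p 1 1 1 (\<lambda>_. 0) y =
      (\<Sum>k\<in>UNIV. iter_pd [Some k, Some k] G y t) / G y t + G y t powr p / G y t"
    by (simp add: harnack_def lap_u_def grad_sq_u_def partial_q partial_u q_def rel_pd_def
        sum_subtractf sum_divide_distrib power2_eq_square)
  also have "\<dots> = q [None] y"
    using assms[of y] by (simp add: q_def rel_pd_def add_divide_distrib)
  finally show "q [None] y = harnack p 1 1 1 (\<lambda>_. 0) y" ..
qed

lemma harnack_spacetime_has_time_deriv:
  assumes "smooth_full \<Phi>"
  shows "((\<lambda>s. harnack_spacetime G \<Phi> p a b c x s) has_real_derivative
    a * (\<Sum>j\<in>UNIV. partial j (partial j (q [None])) x)
    + b * (2 * (\<Sum>j\<in>UNIV. partial j (q [None]) x * partial j u x))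
    + c * ((p - 1) * exp (u x * (p - 1)) * q [None] x) + iter_pd [None] \<Phi> x t) (at t)"
proof -
  have "q [None, Some j] = q [Some j, None]"
    "q [None, Some j, Some j] = q [Some j, Some j, None]" for j
    using q_swap[of "[]" None "Some j" "[]"] q_swap[of "[]" None "Some j" "[Some j]"]
      q_swap[of "[Some j]" None "Some j" "[]"] by simp_all
  moreover have "((\<lambda>s. G x s) has_real_derivative q [None] x * G x t) (at t)"
    using smooth_full_has_time_deriv[OF smooth, of "[]" x t] pos[of x]
    by (simp add: q_def rel_pd_def)
  ultimately show ?thesis
    unfolding harnack_spacetime_def
    using smooth_full_has_time_deriv[OF assms, of "[]" x t] pos[of x]
    by (auto intro!: derivative_eq_intros has_time_deriv_q
        simp: partial_partial_q partial_q partial_u q_def[symmetric] u_def[symmetric]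
          sum_distrib_left algebra_simps)
qed

lemma harnack_spacetime_evolution:
  fixes \<Phi> :: "real^'n \<Rightarrow> real \<Rightarrow> real" and p \<alpha> \<beta> c :: real and x :: "real^'n"
  assumes "smooth_full \<Phi>"
    and heat: "\<And>y. iter_pd [None] G y t = (\<Sum>k\<in>UNIV. iter_pd [Some k, Some k] G y t) + G y t powr p"
  defines "H \<equiv> harnack p \<alpha> \<beta> c (\<lambda>y. \<Phi> y t)" and "e \<equiv> exp (u x * (p - 1))"
  shows "((\<lambda>s. harnack_spacetime G \<Phi> p \<alpha> \<beta> c x s) has_real_derivative
    (\<Sum>i\<in>UNIV. partial i (partial i H) x) + 2 * (\<Sum>i\<in>UNIV. partial i H x * partial i u x)
    + (p - 1) * e * H x + 2 * (\<alpha> - \<beta>) * hess_sq_u x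
    + (\<alpha> * (p - 1) + \<beta> - c * p) * (p - 1) * e * grad_sq_u x - (p - 1) * e * \<Phi> x t
    + iter_pd [None] \<Phi> x t - (\<Sum>i\<in>UNIV. partial i (partial i (\<lambda>y. \<Phi> y t)) x)
    - 2 * (\<Sum>i\<in>UNIV. partial i (\<lambda>y. \<Phi> y t) x * partial i u x)) (at t)"
    (is "(_ has_real_derivative ?rhs) _")
proof -
  have \<Phi>_slice: "partially_differentiable (\<lambda>y. \<Phi> y t)"
    "\<And>i. partially_differentiable (partial i (\<lambda>y. \<Phi> y t))"
    using partially_differentiable_iter_pd_slice[OF assms(1), of "[]"]
      partially_differentiable_iter_pd_slice[OF assms(1), of "[Some _]"]
    by (simp_all add: partial_iter_pd_slice[OF assms(1), of _ "[]", simplified])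
  have zero: "partially_differentiable (\<lambda>_. 0)" "\<And>i. partially_differentiable (partial i (\<lambda>_. 0))"
    by (simp_all add: partially_differentiable_const)
  note lap_u_t = lap_harnack[OF zero, simplified]
  note grad_u_t_inner_grad_u = grad_harnack_inner_grad_u[OF zero(1), simplified]
  show ?thesis
  proof (rule DERIV_cong[OF harnack_spacetime_has_time_deriv[OF assms(1)]])
    show "\<alpha> * (\<Sum>j\<in>UNIV. partial j (partial j (q [None])) x)
      + \<beta> * (2 * (\<Sum>j\<in>UNIV. partial j (q [None]) x * partial j u x))
      + c * ((p - 1) * exp (u x * (p - 1)) * q [None] x) + iter_pd [None] \<Phi> x t = ?rhs"
      unfolding log_heat_equation[OF heat] lap_u_t grad_u_t_inner_grad_u H_def e_def
        lap_harnack[OF \<Phi>_slice] grad_harnack_inner_grad_u[OF \<Phi>_slice(1)]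
      by (simp add: harnack_def algebra_simps)
  qed
qed

end

section \<open>Restriction to t \<ge> 0\<close>

lemma positive_smooth_slice_extension:
  assumes "smooth_full G" "\<forall>x s. 0 \<le> s \<longrightarrow> G x s = f x s" "\<forall>x s. 0 \<le> s \<longrightarrow> f x s > 0" "0 \<le> t"
  shows "positive_smooth_slice G t"
  using assms by unfold_locales auto

lemma harnack_spacetime_extension:
  assumes G: "smooth_full G" "\<forall>x s. 0 \<le> s \<longrightarrow> G x s = f x s"
    and f_pos: "\<forall>x s. 0 \<le> s \<longrightarrow> f x s > 0"
    and \<Phi>: "\<forall>x s. 0 \<le> s \<longrightarrow> \<Phi> x s = \<phi> x s" and "0 \<le> t"
  shows "\<alpha> * lap (\<lambda>y s. ln (f y s)) x t + \<beta> * (norm (grad (\<lambda>y s. ln (f y s)) x t))\<^sup>2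
           + c * exp (ln (f x t) * (p - 1)) + \<phi> x t = harnack_spacetime G \<Phi> p \<alpha> \<beta> c x t"
proof -
  interpret S: positive_smooth_slice G t
    using positive_smooth_slice_extension[OF G f_pos \<open>0 \<le> t\<close>] .
  have "(\<lambda>y. ln (f y t)) = S.u"
    using G(2) \<open>0 \<le> t\<close> by (auto simp: S.u_def)
  then show ?thesis
    using G(2) \<Phi> \<open>0 \<le> t\<close>
    by (auto simp: S.harnack_eq_harnack_spacetime[symmetric] S.harnack_def S.lap_u_def
        S.grad_sq_u_def S.u_def lap_eq_sum_partial norm_grad_sq_eq_sum_partial)
qed

lemma heat_equation_extension:
  assumes G: "smooth_full G" "\<forall>x s. 0 \<le> s \<longrightarrow> G x s = f x s"
    and f_eq: "\<forall>x t. 0 \<le> t \<longrightarrow> dt f x t = lap f x t + f x t powr p" and "0 \<le> t"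
  shows "iter_pd [None] G y t = (\<Sum>k\<in>UNIV. iter_pd [Some k, Some k] G y t) + G y t powr p"
proof -
  have f_slice: "(\<lambda>y. f y t) = (\<lambda>y. iter_pd [] G y t)"
    using G(2) \<open>0 \<le> t\<close> by simp
  have "iter_pd [None] G y t = dt f y t"
    using dt_eq_time_deriv[OF G \<open>0 \<le> t\<close>] by simp
  also have "\<dots> = lap f y t + f y t powr p"
    using f_eq \<open>0 \<le> t\<close> by simp
  also have "lap f y t = (\<Sum>k\<in>UNIV. iter_pd [Some k, Some k] G y t)"
    unfolding lap_eq_sum_partial f_slice partial_iter_pd_slice[OF G(1)] ..
  finally show ?thesis
    using G(2) \<open>0 \<le> t\<close> by simp
qed

theorem lemma2p1:
  fixes f \<phi> :: "real^'n::finite \<Rightarrow> real \<Rightarrow> real"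
    and p \<alpha> \<beta> c :: real
  assumes hp: "p > 1"
    and f_smooth: "smooth_half f"
    and f_pos: "\<forall>x t. 0 \<le> t \<longrightarrow> f x t > 0"
    and f_eq: "\<forall>x t. 0 \<le> t \<longrightarrow> dt f x t = lap f x t + f x t powr p"
    and phi_smooth: "smooth_half \<phi>"
    and phi_nonneg: "\<forall>x t. 0 \<le> t \<longrightarrow> \<phi> x t \<ge> 0"
  defines "u \<equiv> (\<lambda>x t. ln (f x t))"
    and "H \<equiv> (\<lambda>x t. \<alpha> * lap (\<lambda>y s. ln (f y s)) x t
                     + \<beta> * (norm (grad (\<lambda>y s. ln (f y s)) x t))\<^sup>2
                     + c * exp (ln (f x t) * (p - 1)) + \<phi> x t)"
  shows "\<forall>x t. 0 \<le> t \<longrightarrow>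
    dt H x t = lap H x t + 2 * (grad H x t \<bullet> grad u x t)
      + (p - 1) * exp (u x t * (p - 1)) * H x t
      + 2 * (\<alpha> - \<beta>) * hess_sq u x t
      + (\<alpha> * (p - 1) + \<beta> - c * p) * (p - 1) * exp (u x t * (p - 1)) * (norm (grad u x t))\<^sup>2
      - (p - 1) * exp (u x t * (p - 1)) * \<phi> x t
      + dt \<phi> x t - lap \<phi> x t - 2 * (grad \<phi> x t \<bullet> grad u x t)"
proof (intro allI impI)
  fix x :: "real^'n" and t :: real
  assume "0 \<le> t"
  obtain G where G: "smooth_full G" "\<forall>x s. 0 \<le> s \<longrightarrow> G x s = f x s"
    using f_smooth by (auto simp: smooth_half_def)
  obtain \<Phi> where \<Phi>: "smooth_full \<Phi>" "\<forall>x s. 0 \<le> s \<longrightarrow> \<Phi> x s = \<phi> x s"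
    using phi_smooth by (auto simp: smooth_half_def)
  interpret S: positive_smooth_slice G t
    by (rule positive_smooth_slice_extension[OF G f_pos \<open>0 \<le> t\<close>])
  have H_spacetime: "\<forall>s\<ge>0. H y s = harnack_spacetime G \<Phi> p \<alpha> \<beta> c y s" for y
    unfolding H_def using harnack_spacetime_extension[OF G f_pos \<Phi>(2)] by blast
  note dtH = dt_eqI[OF S.harnack_spacetime_evolution[OF \<Phi>(1)
      heat_equation_extension[OF G f_eq \<open>0 \<le> t\<close>]] \<open>0 \<le> t\<close> H_spacetime]
  have H_slice: "(\<lambda>y. H y t) = S.harnack p \<alpha> \<beta> c (\<lambda>y. \<Phi> y t)"
    using H_spacetime \<open>0 \<le> t\<close> by (simp add: fun_eq_iff S.harnack_eq_harnack_spacetime)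
  have u_slice: "(\<lambda>y. u y t) = S.u"
    using G(2) \<open>0 \<le> t\<close> by (simp add: u_def S.u_def[abs_def])
  have \<phi>_slice: "(\<lambda>y. \<phi> y t) = (\<lambda>y. \<Phi> y t)"
    using \<Phi>(2) \<open>0 \<le> t\<close> by simp
  show "dt H x t = lap H x t + 2 * (grad H x t \<bullet> grad u x t)
      + (p - 1) * exp (u x t * (p - 1)) * H x t
      + 2 * (\<alpha> - \<beta>) * hess_sq u x t
      + (\<alpha> * (p - 1) + \<beta> - c * p) * (p - 1) * exp (u x t * (p - 1)) * (norm (grad u x t))\<^sup>2
      - (p - 1) * exp (u x t * (p - 1)) * \<phi> x t
      + dt \<phi> x t - lap \<phi> x t - 2 * (grad \<phi> x t \<bullet> grad u x t)"
    unfolding dtH dt_eq_time_deriv[OF \<Phi> \<open>0 \<le> t\<close>] lap_eq_sum_partial grad_inner_eq_sum_partial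
      hess_sq_eq_sum_partial norm_grad_sq_eq_sum_partial H_slice u_slice \<phi>_slice
    using fun_cong[OF H_slice, of x] fun_cong[OF u_slice, of x] fun_cong[OF \<phi>_slice, of x]
    by (simp add: S.hess_sq_u_def S.grad_sq_u_def)
qed

end
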